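(* Let $p$ be an odd prime, $m=p-1$, and suppose $q=2m+1$ is also prime. Let $A_1$ be the $m\times m$ matrix with $(i,j)$ entry $ij\pmod q$, $1\le i,j\le m$, and let $E=w(A_1)/2$ (entrywise). Then $E$ is an $m\times m$ Latin hypercube design and $d_1(E)=\lfloor (m+1)m/3\rfloor$; in particular $E$ attains the upper bound on $d_1$ over all $m\times m$ LHDs.
   Context: The modified Williams transformation $w:\{0,\ldots,q-1\}\to\{0,\ldots,q-1\}$ is $w(x)=2x$ for $0\le x<q/2$ and $w(x)=2(q-x)$ for $q/2\le x<q$. ($A_1$ is the leading $m\times m$ principal submatrix of the $(2m+1)\times 2m$ good lattice point set whose $i$th row is $i\cdot(1,\ldots,2m)\pmod q$.) An $m\times m$ LHD is a matrix each of whose columns is a permutation of $\{1,\ldots,m\}$; $d_1(X)=\min_{i<j}\sum_k|x_{ik}-x_{jk}|$. *)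

theory Defs
  imports "HOL-Computational_Algebra.Primes"
begin

text \<open>Matrices are functions nat => nat => int, rows and columns indexed from 1.\<close>

definition williams :: "nat \<Rightarrow> nat \<Rightarrow> nat" where
  "williams q x = (if 2 * x < q then 2 * x else 2 * (q - x))"

definition A1 :: "nat \<Rightarrow> nat \<Rightarrow> nat \<Rightarrow> nat" where
  "A1 q i j = (i * j) mod q"

definition Emat :: "nat \<Rightarrow> nat \<Rightarrow> nat \<Rightarrow> int" where
  "Emat q i j = int (williams q (A1 q i j)) div 2"

definition is_LHD :: "nat \<Rightarrow> nat \<Rightarrow> (nat \<Rightarrow> nat \<Rightarrow> int) \<Rightarrow> bool" where
  "is_LHD n k X \<longleftrightarrow> (\<forall>c\<in>{1..k}. bij_betw (\<lambda>r. X r c) {1..n} (int ` {1..n}))"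

definition d1 :: "nat \<Rightarrow> nat \<Rightarrow> (nat \<Rightarrow> nat \<Rightarrow> int) \<Rightarrow> int" where
  "d1 n k X = Min {(\<Sum>c=1..k. \<bar>X r c - X s c\<bar>) | r s. 1 \<le> r \<and> r < s \<and> s \<le> n}"

end

theory Submission
  imports Defs "HOL-Number_Theory.Cong"
begin

text \<open>
  Write \<open>|x|\<close> for the distance from \<open>x\<close> to the nearest multiple of \<open>q = 2m + 1\<close>, so that
  \<open>E r c = |r c|\<close>. Reindexing by \<open>v = |r c|\<close>, the \<open>L\<^sub>1\<close> distance of rows \<open>r \<noteq> s\<close> becomes
  \<open>D t = \<Sum>v. \<bar>v - |t v|\<bar>\<close> with \<open>t \<equiv> s / r\<close>. Since \<open>v + |t v| = \<bar>v - |t v|\<bar> + 2 min v |t v|\<close>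
  and \<open>v \<mapsto> |t v|\<close> permutes \<open>{1..m}\<close>, we get \<open>D t + 2 S t = m (m + 1)\<close> for
  \<open>S t = \<Sum>v. min v |t v|\<close>. The identity \<open>\<bar>|x| - |y|\<bar> = min |x - y| |x + y|\<close> turns \<open>D t\<close>
  into \<open>S g\<close> for \<open>g \<equiv> (1 + t) / (1 - t)\<close>; applying the map \<open>t \<mapsto> (1 + t) / (1 - t)\<close> twice
  gives \<open>-1 / t\<close>, and \<open>S (-1 / t) = S t\<close>. Hence \<open>D t = S g\<close> and \<open>D g = S t\<close>, which forces
  \<open>3 D t = m (m + 1)\<close>: all rows of \<open>E\<close> are equidistant. An equidistant LHD maximises \<open>d\<^sub>1\<close>,
  because the sum of all pairwise row distances is the same for every LHD.
\<close>

section \<open>Distance to the nearest multiple of an odd modulus\<close>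

locale odd_modulus =
  fixes Q :: int and M :: nat
  assumes Q_eq: "Q = 2 * int M + 1"
begin

lemma Q_pos: "0 < Q"
  using Q_eq by simp

definition cabs :: "int \<Rightarrow> int" where
  "cabs x = min (x mod Q) (Q - x mod Q)"

lemma not_Q_dvd_int: "u \<in> {1..M} \<Longrightarrow> \<not> Q dvd int u"
  using Q_eq by (intro zdvd_not_zless) auto

lemma not_Q_dvd_add: "u \<in> {1..M} \<Longrightarrow> v \<in> {1..M} \<Longrightarrow> \<not> Q dvd (int u + int v)"
  using Q_eq by (intro zdvd_not_zless) auto

lemma Q_dvd_diff_imp_eq:
  assumes "u \<in> {1..M}" "v \<in> {1..M}" "Q dvd (int u - int v)"
  shows "u = v"
proof (rule ccontr)
  assume "u \<noteq> v"
  then have "Q \<le> \<bar>int u - int v\<bar>" using dvd_imp_le_int[OF _ assms(3)] by simp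
  then show False using assms(1,2) Q_eq by auto
qed

lemma cabs_cong: "Q dvd (x - y) \<Longrightarrow> cabs x = cabs y"
  unfolding cabs_def by (metis mod_eq_dvd_iff)

lemma cabs_uminus [simp]: "cabs (- x) = cabs x"
  unfolding cabs_def by (simp add: zmod_zminus1_eq_if min.commute)

lemma cabs_nonneg: "0 \<le> cabs x"
  unfolding cabs_def using pos_mod_bound[of Q x] pos_mod_sign[of Q x] Q_pos by linarith

lemma cabs_le: "cabs x \<le> int M"
  unfolding cabs_def using pos_mod_bound[of Q x] pos_mod_sign[of Q x] Q_pos Q_eq by linarith

lemma cabs_pos: "\<not> Q dvd x \<Longrightarrow> 1 \<le> cabs x"
  unfolding cabs_def using pos_mod_bound[of Q x] pos_mod_sign[of Q x] Q_pos
  by (smt (verit) dvd_eq_mod_eq_0)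

lemma cabs_eq_sign_mult: obtains s where "s = 1 \<or> s = -1" "Q dvd (cabs x - s * x)"
proof (cases "x mod Q \<le> Q - x mod Q")
  case True
  then have "cabs x = x mod Q" unfolding cabs_def by simp
  then show ?thesis using that[of 1] by (simp add: mod_eq_dvd_iff[symmetric])
next
  case False
  then have "cabs x - (-1) * x = Q - (x mod Q - x)" unfolding cabs_def by simp
  moreover have "Q dvd (x mod Q - x)" by (metis mod_eq_dvd_iff mod_mod_trivial)
  ultimately show ?thesis using that[of "-1"] by (metis dvd_diff dvd_refl)
qed

lemma cabs_eq_self: "0 \<le> k \<Longrightarrow> k \<le> int M \<Longrightarrow> cabs k = k"
  unfolding cabs_def using Q_eq by (simp add: mod_pos_pos_trivial)

lemma cabs_eq_abs: "\<bar>k\<bar> \<le> int M \<Longrightarrow> cabs k = \<bar>k\<bar>"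
  using cabs_eq_self[of k] cabs_eq_self[of "- k"] by (cases "0 \<le> k") auto

lemma cabs_int [simp]: "u \<in> {1..M} \<Longrightarrow> cabs (int u) = int u"
  using cabs_eq_abs[of "int u"] by simp

lemma cabs_eq_imp_dvd: "cabs x = cabs y \<Longrightarrow> Q dvd (x - y) \<or> Q dvd (x + y)"
proof -
  assume e: "cabs x = cabs y"
  obtain s where s: "s = 1 \<or> s = -1" "Q dvd (cabs x - s * x)" by (rule cabs_eq_sign_mult)
  obtain s' where s': "s' = 1 \<or> s' = -1" "Q dvd (cabs y - s' * y)" by (rule cabs_eq_sign_mult)
  have "Q dvd ((cabs y - s' * y) - (cabs x - s * x))" using s s' by (simp add: dvd_diff)
  then have d: "Q dvd (s * x - s' * y)" using e by (simp add: algebra_simps)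
  have "s * x - s' * y = x - y \<or> s * x - s' * y = x + y
      \<or> s * x - s' * y = - (x + y) \<or> s * x - s' * y = - (x - y)"
    using s(1) s'(1) by auto
  then show ?thesis using d by (metis dvd_minus_iff)
qed

lemma abs_diff_cabs: "\<bar>cabs x - cabs y\<bar> = min (cabs (x - y)) (cabs (x + y))"
proof -
  \<comment> \<open>Replace \<open>x, y\<close> by \<open>\<plusminus>|x|, \<plusminus>|y|\<close>; for \<open>0 \<le> a, b \<le> M\<close> the minimum is \<open>|a - b|\<close>.\<close>
  let ?a = "cabs x" and ?b = "cabs y"
  obtain s where s: "s = 1 \<or> s = -1" "Q dvd (?a - s * x)" by (rule cabs_eq_sign_mult)
  obtain s' where s': "s' = 1 \<or> s' = -1" "Q dvd (?b - s' * y)" by (rule cabs_eq_sign_mult)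
  have bounds: "0 \<le> ?a" "?a \<le> int M" "0 \<le> ?b" "?b \<le> int M"
    using cabs_nonneg cabs_le by auto
  have diff: "cabs (?a - ?b) = \<bar>?a - ?b\<bar>"
    using bounds by (intro cabs_eq_abs) auto
  have "(?a + ?b) mod Q = ?a + ?b" using bounds Q_eq by (intro mod_pos_pos_trivial) auto
  then have "cabs (?a + ?b) = min (?a + ?b) (Q - (?a + ?b))" by (simp add: cabs_def)
  then have "\<bar>?a - ?b\<bar> \<le> cabs (?a + ?b)" using bounds Q_eq by auto
  with diff have key: "min (cabs (?a - ?b)) (cabs (?a + ?b)) = \<bar>?a - ?b\<bar>" by simp
  have dx: "Q dvd (x - s * ?a)" and dy: "Q dvd (y - s' * ?b)"
  proof -
    have "x - s * ?a = - s * (?a - s * x)" "y - s' * ?b = - s' * (?b - s' * y)"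
      using s(1) s'(1) by (auto simp: algebra_simps)
    then show "Q dvd (x - s * ?a)" "Q dvd (y - s' * ?b)" using s(2) s'(2) by simp_all
  qed
  have "(x - y) - (s * ?a - s' * ?b) = (x - s * ?a) - (y - s' * ?b)" by simp
  then have diff_eq: "cabs (x - y) = cabs (s * ?a - s' * ?b)"
    using dvd_diff[OF dx dy] by (metis cabs_cong)
  have "(x + y) - (s * ?a + s' * ?b) = (x - s * ?a) + (y - s' * ?b)" by simp
  then have add_eq: "cabs (x + y) = cabs (s * ?a + s' * ?b)"
    using dvd_add[OF dx dy] by (metis cabs_cong)
  have "cabs (- ?a + ?b) = cabs (?a - ?b)" "cabs (- ?a - ?b) = cabs (?a + ?b)"
    using cabs_uminus[of "?a - ?b"] cabs_uminus[of "?a + ?b"] by simp_all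
  with s(1) s'(1) show ?thesis
    using diff_eq add_eq key by (elim disjE) (simp_all add: min.commute)
qed

definition min_sum :: "int \<Rightarrow> int" where
  "min_sum t = (\<Sum>u\<in>{1..M}. min (int u) (cabs (t * int u)))"

definition dist_sum :: "int \<Rightarrow> int" where
  "dist_sum t = (\<Sum>u\<in>{1..M}. \<bar>int u - cabs (t * int u)\<bar>)"

lemma min_sum_uminus: "min_sum (- t) = min_sum t"
  unfolding min_sum_def by simp

end

section \<open>Equidistance modulo a prime\<close>

locale prime_odd_modulus = odd_modulus +
  assumes prime_2M1: "prime (2 * M + 1)"
begin

lemma prime_Q: "prime Q"
proof -
  have "Q = int (2 * M + 1)" using Q_eq by simp
  then show ?thesis using prime_2M1 by (simp only: prime_nat_int_transfer)
qed

lemma Q_dvd_mult_iff: "Q dvd a * b \<longleftrightarrow> Q dvd a \<or> Q dvd b"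
  using prime_Q prime_dvd_mult_iff by blast

lemma M_pos: "1 \<le> M"
  using prime_2M1 by (cases M) auto

lemma not_Q_dvd_2: "\<not> Q dvd 2"
  using M_pos Q_eq by (intro zdvd_not_zless) auto

lemma exists_quotient: "\<not> Q dvd a \<Longrightarrow> \<exists>g. Q dvd (g * a - b)"
proof -
  assume "\<not> Q dvd a"
  then have "coprime a Q"
    using prime_imp_coprime[OF prime_Q] coprime_commute by blast
  then obtain x where "[a * x = 1] (mod Q)" using cong_solve_coprime_int by blast
  then have "Q dvd (b * (a * x - 1))" by (simp add: cong_iff_dvd_diff)
  then have "Q dvd ((b * x) * a - b)" by (simp add: algebra_simps)
  then show ?thesis by blast
qed

lemma bij_betw_cabs_mult:
  assumes "\<not> Q dvd a"
  shows "bij_betw (\<lambda>u. nat (cabs (a * int u))) {1..M} {1..M}"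
proof -
  let ?f = "\<lambda>u. nat (cabs (a * int u))"
  have "?f ` {1..M} \<subseteq> {1..M}"
  proof (rule image_subsetI)
    fix u assume "u \<in> {1..M}"
    then have "\<not> Q dvd (a * int u)" using assms not_Q_dvd_int Q_dvd_mult_iff by blast
    then show "?f u \<in> {1..M}" using cabs_pos cabs_le by (force simp: le_nat_iff nat_le_iff)
  qed
  moreover have "inj_on ?f {1..M}"
  proof (rule inj_onI)
    fix u v assume uv: "u \<in> {1..M}" "v \<in> {1..M}" "?f u = ?f v"
    then have "cabs (a * int u) = cabs (a * int v)"
      using cabs_nonneg by (metis eq_nat_nat_iff)
    then have "Q dvd (a * (int u - int v)) \<or> Q dvd (a * (int u + int v))"
      by (auto dest: cabs_eq_imp_dvd simp: algebra_simps)
    then have "Q dvd (int u - int v) \<or> Q dvd (int u + int v)"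
      using assms Q_dvd_mult_iff by blast
    then show "u = v" using uv(1,2) Q_dvd_diff_imp_eq not_Q_dvd_add by blast
  qed
  ultimately show ?thesis
    using endo_inj_surj[of "{1..M}" ?f] by (simp add: bij_betw_def)
qed

lemma sum_cabs_mult_reindex:
  assumes a: "\<not> Q dvd a" and c: "Q dvd (c * a - b)"
  shows "(\<Sum>u\<in>{1..M}. F (cabs (a * int u)) (cabs (b * int u)))
       = (\<Sum>v\<in>{1..M}. F (int v) (cabs (c * int v)))"
proof -
  have "cabs (b * int u) = cabs (c * cabs (a * int u))" for u
  proof -
    obtain s where s: "s = 1 \<or> s = -1" "Q dvd (cabs (a * int u) - s * (a * int u))"
      by (rule cabs_eq_sign_mult)
    have "c * cabs (a * int u) - s * (b * int u)
        = c * (cabs (a * int u) - s * (a * int u)) + s * int u * (c * a - b)"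
      by (simp add: algebra_simps)
    then have "Q dvd (c * cabs (a * int u) - s * (b * int u))" using s(2) c by simp
    then have "cabs (c * cabs (a * int u)) = cabs (s * (b * int u))" by (rule cabs_cong)
    then show ?thesis using s(1) by auto
  qed
  then have "(\<Sum>u\<in>{1..M}. F (cabs (a * int u)) (cabs (b * int u)))
      = (\<Sum>u\<in>{1..M}. (\<lambda>v. F (int v) (cabs (c * int v))) (nat (cabs (a * int u))))"
    using cabs_nonneg by (intro sum.cong) auto
  also have "\<dots> = (\<Sum>v\<in>{1..M}. F (int v) (cabs (c * int v)))"
    by (rule sum.reindex_bij_betw[OF bij_betw_cabs_mult[OF a]])
  finally show ?thesis .
qed

lemma sum_cabs_mult:
  assumes "\<not> Q dvd t"
  shows "(\<Sum>u\<in>{1..M}. cabs (t * int u)) = (\<Sum>u\<in>{1..M}. int u)"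
proof -
  have "(\<Sum>u\<in>{1..M}. cabs (t * int u)) = (\<Sum>u\<in>{1..M}. int (nat (cabs (t * int u))))"
    using cabs_nonneg by simp
  also have "\<dots> = (\<Sum>u\<in>{1..M}. int u)"
    by (rule sum.reindex_bij_betw[OF bij_betw_cabs_mult[OF assms]])
  finally show ?thesis .
qed

lemma min_sum_inverse:
  assumes "\<not> Q dvd t" "Q dvd (c * t - 1)"
  shows "min_sum c = min_sum t"
  using sum_cabs_mult_reindex[OF assms, of "\<lambda>x y. min y x"]
  unfolding min_sum_def by (simp add: min.commute)

lemma dist_sum_add_min_sum:
  assumes "\<not> Q dvd t"
  shows "dist_sum t + 2 * min_sum t = int M * (int M + 1)"
proof -
  have "dist_sum t + 2 * min_sum t
      = (\<Sum>u\<in>{1..M}. \<bar>int u - cabs (t * int u)\<bar> + 2 * min (int u) (cabs (t * int u)))"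
    unfolding dist_sum_def min_sum_def by (simp add: sum.distrib sum_distrib_left)
  also have "\<dots> = (\<Sum>u\<in>{1..M}. int u + cabs (t * int u))"
    by (intro sum.cong) auto
  also have "\<dots> = 2 * (\<Sum>u\<in>{1..M}. int u)"
    using sum_cabs_mult[OF assms] by (simp add: sum.distrib)
  also have "\<dots> = int M * (int M + 1)"
    using double_gauss_sum_from_Suc_0[of M] by simp
  finally show ?thesis .
qed

lemma dist_sum_eq_min_sum:
  assumes "\<not> Q dvd (1 - t)" "Q dvd (g * (1 - t) - (1 + t))"
  shows "dist_sum t = min_sum g"
proof -
  have "dist_sum t = (\<Sum>u\<in>{1..M}. min (cabs ((1 - t) * int u)) (cabs ((1 + t) * int u)))"
    unfolding dist_sum_def
  proof (intro sum.cong refl)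
    fix u assume "u \<in> {1..M}"
    then have "\<bar>int u - cabs (t * int u)\<bar> = \<bar>cabs (int u) - cabs (t * int u)\<bar>" by simp
    also have "\<dots> = min (cabs ((1 - t) * int u)) (cabs ((1 + t) * int u))"
      by (simp add: abs_diff_cabs algebra_simps)
    finally show "\<bar>int u - cabs (t * int u)\<bar> = \<dots>" .
  qed
  also have "\<dots> = min_sum g"
    unfolding min_sum_def by (rule sum_cabs_mult_reindex[OF assms])
  finally show ?thesis .
qed

lemma cayley_not_dvd:
  assumes g: "Q dvd (g * (1 - t) - (1 + t))"
    and t: "\<not> Q dvd t" "\<not> Q dvd (1 + t)"
  shows "\<not> Q dvd g" "\<not> Q dvd (1 - g)" "\<not> Q dvd (1 + g)"
proof -
  show "\<not> Q dvd g"
  proof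
    assume "Q dvd g"
    then have "Q dvd (g * (1 - t) - (g * (1 - t) - (1 + t)))" using g by (metis dvd_diff dvd_mult2)
    with t(2) show False by simp
  qed
  show "\<not> Q dvd (1 - g)"
  proof
    assume "Q dvd (1 - g)"
    then have "Q dvd ((1 - g) * (1 - t) + (g * (1 - t) - (1 + t)))" using g by simp
    moreover have "(1 - g) * (1 - t) + (g * (1 - t) - (1 + t)) = - (2 * t)"
      by (simp add: algebra_simps)
    ultimately show False using Q_dvd_mult_iff not_Q_dvd_2 t(1) by simp
  qed
  show "\<not> Q dvd (1 + g)"
  proof
    assume "Q dvd (1 + g)"
    then have "Q dvd ((1 + g) * (1 - t) - (g * (1 - t) - (1 + t)))" using g by simp
    moreover have "(1 + g) * (1 - t) - (g * (1 - t) - (1 + t)) = 2" by (simp add: algebra_simps)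
    ultimately show False using not_Q_dvd_2 by simp
  qed
qed

text \<open>Applying \<open>t \<mapsto> (1 + t) / (1 - t)\<close> twice gives \<open>-1 / t\<close>.\<close>

lemma cayley_cayley:
  assumes g: "Q dvd (g * (1 - t) - (1 + t))" and d: "Q dvd (d * (1 - g) - (1 + g))"
  shows "Q dvd ((- d) * t - 1)"
proof -
  have "2 * (d * t + 1) = - ((d * (1 - g) - (1 + g)) * (1 - t)) - (d + 1) * (g * (1 - t) - (1 + t))"
    by (simp add: algebra_simps)
  then have "Q dvd (2 * (d * t + 1))" using g d by simp
  then have "Q dvd (d * t + 1)" using Q_dvd_mult_iff not_Q_dvd_2 by blast
  moreover have "(- d) * t - 1 = - (d * t + 1)" by simp
  ultimately show ?thesis by (simp only: dvd_minus_iff)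
qed

lemma three_dist_sum:
  assumes t: "\<not> Q dvd t" "\<not> Q dvd (1 - t)" "\<not> Q dvd (1 + t)"
  shows "3 * dist_sum t = int M * (int M + 1)"
proof -
  obtain g where g: "Q dvd (g * (1 - t) - (1 + t))" using exists_quotient[OF t(2)] by blast
  note g_not_dvd = cayley_not_dvd[OF g t(1,3)]
  obtain d where d: "Q dvd (d * (1 - g) - (1 + g))" using exists_quotient[OF g_not_dvd(2)] by blast
  have "min_sum d = min_sum t"
    using min_sum_inverse[OF t(1) cayley_cayley[OF g d]] min_sum_uminus by metis
  moreover have "dist_sum t = min_sum g" by (rule dist_sum_eq_min_sum[OF t(2) g])
  moreover have "dist_sum g = min_sum d" by (rule dist_sum_eq_min_sum[OF g_not_dvd(2) d])
  ultimately show ?thesis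
    using dist_sum_add_min_sum[OF t(1)] dist_sum_add_min_sum[OF g_not_dvd(1)] by linarith
qed

end

section \<open>The design \<open>E\<close>\<close>

lemma (in odd_modulus) Emat_eq_cabs: "Emat (2 * M + 1) r c = cabs (int r * int c)"
proof -
  let ?x = "r * c mod (2 * M + 1)"
  have Q_int: "Q = int (2 * M + 1)" using Q_eq by simp
  have "int (williams (2 * M + 1) ?x) div 2 = min (int ?x) (Q - int ?x)"
  proof (cases "2 * ?x < 2 * M + 1")
    case True
    then show ?thesis unfolding williams_def Q_int by simp
  next
    case False
    have "?x < 2 * M + 1" by simp
    then have "int (williams (2 * M + 1) ?x) = 2 * (Q - int ?x)"
      using False unfolding williams_def Q_int by (simp add: of_nat_diff)
    then show ?thesis using False unfolding Q_int by simp
  qed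
  then show ?thesis unfolding Emat_def A1_def cabs_def by (simp add: zmod_int Q_int)
qed

context prime_odd_modulus
begin

lemma Emat_column_bij:
  assumes "c \<in> {1..M}"
  shows "bij_betw (\<lambda>r. Emat (2 * M + 1) r c) {1..M} (int ` {1..M})"
proof -
  have "bij_betw (int \<circ> (\<lambda>r. nat (cabs (int c * int r)))) {1..M} (int ` {1..M})"
    by (rule bij_betw_trans[OF bij_betw_cabs_mult[OF not_Q_dvd_int[OF assms]] inj_on_imp_bij_betw])
       simp
  moreover have "int \<circ> (\<lambda>r. nat (cabs (int c * int r))) = (\<lambda>r. cabs (int r * int c))"
    using cabs_nonneg by (simp add: fun_eq_iff mult.commute)
  ultimately show ?thesis unfolding Emat_eq_cabs by simp
qed

lemma ratio_not_dvd:
  assumes r: "r \<in> {1..M}" and s: "s \<in> {1..M}" and "r \<noteq> s"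
    and t: "Q dvd (t * int r - int s)"
  shows "\<not> Q dvd t" "\<not> Q dvd (1 - t)" "\<not> Q dvd (1 + t)"
proof -
  show "\<not> Q dvd t"
  proof
    assume "Q dvd t"
    then have "Q dvd (t * int r - (t * int r - int s))" using t by (metis dvd_diff dvd_mult2)
    then show False using not_Q_dvd_int[OF s] by simp
  qed
  show "\<not> Q dvd (1 - t)"
  proof
    assume "Q dvd (1 - t)"
    then have "Q dvd ((1 - t) * int r + (t * int r - int s))" using t by simp
    then have "Q dvd (int r - int s)" by (simp add: algebra_simps)
    then show False using Q_dvd_diff_imp_eq r s \<open>r \<noteq> s\<close> by blast
  qed
  show "\<not> Q dvd (1 + t)"
  proof
    assume "Q dvd (1 + t)"
    then have "Q dvd ((1 + t) * int r - (t * int r - int s))" using t by simp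
    then have "Q dvd (int r + int s)" by (simp add: algebra_simps)
    then show False using not_Q_dvd_add r s by blast
  qed
qed

lemma Emat_row_distance:
  assumes r: "r \<in> {1..M}" and s: "s \<in> {1..M}" and "r \<noteq> s"
  shows "(\<Sum>c=1..M. \<bar>Emat (2 * M + 1) r c - Emat (2 * M + 1) s c\<bar>) = int ((M + 1) * M div 3)"
proof -
  have r_not_dvd: "\<not> Q dvd int r" using not_Q_dvd_int[OF r] .
  obtain t where t: "Q dvd (t * int r - int s)" using exists_quotient[OF r_not_dvd] by blast
  have "(\<Sum>c=1..M. \<bar>Emat (2 * M + 1) r c - Emat (2 * M + 1) s c\<bar>) = dist_sum t"
    using sum_cabs_mult_reindex[OF r_not_dvd t, of "\<lambda>x y. \<bar>x - y\<bar>"]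
    unfolding Emat_eq_cabs dist_sum_def by simp
  then have "3 * (\<Sum>c=1..M. \<bar>Emat (2 * M + 1) r c - Emat (2 * M + 1) s c\<bar>) = int ((M + 1) * M)"
    using three_dist_sum[OF ratio_not_dvd[OF r s \<open>r \<noteq> s\<close> t]] by (simp add: algebra_simps)
  then show ?thesis by (simp add: zdiv_int)
qed

end

section \<open>Equidistant Latin hypercube designs\<close>

lemma d1_le_row_distance:
  assumes "r \<in> {1..n}" "s \<in> {1..n}" "r \<noteq> s"
  shows "d1 n k X \<le> (\<Sum>c=1..k. \<bar>X r c - X s c\<bar>)"
proof -
  let ?A = "{(\<Sum>c=1..k. \<bar>X r c - X s c\<bar>) | r s. 1 \<le> r \<and> r < s \<and> s \<le> n}"
  have fin: "finite ?A"
  proof (rule finite_subset)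
    show "?A \<subseteq> (\<lambda>(r, s). \<Sum>c=1..k. \<bar>X r c - X s c\<bar>) ` ({1..n} \<times> {1..n})" by force
  qed simp
  show ?thesis
  proof (cases "r < s")
    case True
    then have "(\<Sum>c=1..k. \<bar>X r c - X s c\<bar>) \<in> ?A" using assms by auto
    then show ?thesis unfolding d1_def using fin by (rule Min_le[rotated])
  next
    case False
    then have "s < r" using assms(3) by simp
    then have "(\<Sum>c=1..k. \<bar>X s c - X r c\<bar>) \<in> ?A" using assms by auto
    then have "d1 n k X \<le> (\<Sum>c=1..k. \<bar>X s c - X r c\<bar>)"
      unfolding d1_def using fin by (rule Min_le[rotated])
    then show ?thesis by (simp add: abs_minus_commute)
  qed
qed

lemma sum_offdiag_const:
  "(\<Sum>r\<in>{1..n}. \<Sum>s\<in>{1..n}. if r = s then 0 else d) = int n * (int n - 1) * (d :: int)"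
proof -
  have "(\<Sum>s\<in>{1..n}. if r = s then 0 else d) = (\<Sum>s\<in>{1..n}. d - (if r = s then d else 0))"
    for r by (intro sum.cong) auto
  then have "(\<Sum>s\<in>{1..n}. if r = s then 0 else d) = int n * d - d" if "r \<in> {1..n}" for r
    using that by (simp add: sum_subtractf)
  then have "(\<Sum>r\<in>{1..n}. \<Sum>s\<in>{1..n}. if r = s then 0 else d) = (\<Sum>r\<in>{1..n}. int n * d - d)"
    by (intro sum.cong) auto
  then show ?thesis by (simp add: algebra_simps)
qed

lemma LHD_sum_row_distances:
  assumes "is_LHD n k X"
  shows "(\<Sum>r\<in>{1..n}. \<Sum>s\<in>{1..n}. \<Sum>c=1..k. \<bar>X r c - X s c\<bar>)
       = int k * (\<Sum>x\<in>int ` {1..n}. \<Sum>y\<in>int ` {1..n}. \<bar>x - y\<bar>)"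
proof -
  have "(\<Sum>r\<in>{1..n}. \<Sum>s\<in>{1..n}. \<bar>X r c - X s c\<bar>)
      = (\<Sum>x\<in>int ` {1..n}. \<Sum>y\<in>int ` {1..n}. \<bar>x - y\<bar>)" if "c \<in> {1..k}" for c
  proof -
    have b: "bij_betw (\<lambda>r. X r c) {1..n} (int ` {1..n})"
      using assms that unfolding is_LHD_def by blast
    have "(\<Sum>r\<in>{1..n}. \<Sum>s\<in>{1..n}. \<bar>X r c - X s c\<bar>)
        = (\<Sum>r\<in>{1..n}. \<Sum>y\<in>int ` {1..n}. \<bar>X r c - y\<bar>)"
      by (intro sum.cong refl sum.reindex_bij_betw[OF b])
    also have "\<dots> = (\<Sum>x\<in>int ` {1..n}. \<Sum>y\<in>int ` {1..n}. \<bar>x - y\<bar>)"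
      by (rule sum.reindex_bij_betw[OF b])
    finally show ?thesis .
  qed
  then have "(\<Sum>c=1..k. \<Sum>r\<in>{1..n}. \<Sum>s\<in>{1..n}. \<bar>X r c - X s c\<bar>)
      = int k * (\<Sum>x\<in>int ` {1..n}. \<Sum>y\<in>int ` {1..n}. \<bar>x - y\<bar>)"
    by simp
  moreover have "(\<Sum>r\<in>{1..n}. \<Sum>s\<in>{1..n}. \<Sum>c=1..k. \<bar>X r c - X s c\<bar>)
      = (\<Sum>r\<in>{1..n}. \<Sum>c=1..k. \<Sum>s\<in>{1..n}. \<bar>X r c - X s c\<bar>)"
    by (intro sum.cong refl sum.swap)
  moreover have "\<dots> = (\<Sum>c=1..k. \<Sum>r\<in>{1..n}. \<Sum>s\<in>{1..n}. \<bar>X r c - X s c\<bar>)"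
    by (rule sum.swap)
  ultimately show ?thesis by simp
qed

lemma d1_equidistant:
  assumes "2 \<le> n"
    and eq: "\<And>r s. r \<in> {1..n} \<Longrightarrow> s \<in> {1..n} \<Longrightarrow> r \<noteq> s \<Longrightarrow> (\<Sum>c=1..k. \<bar>Y r c - Y s c\<bar>) = V"
  shows "d1 n k Y = V"
proof -
  have "{(\<Sum>c=1..k. \<bar>Y r c - Y s c\<bar>) | r s. 1 \<le> r \<and> r < s \<and> s \<le> n} = {V}"
  proof (intro equalityI subsetI)
    show "x \<in> {V}" if "x \<in> {(\<Sum>c=1..k. \<bar>Y r c - Y s c\<bar>) | r s. 1 \<le> r \<and> r < s \<and> s \<le> n}" for x
      using that eq by fastforce
    show "x \<in> {(\<Sum>c=1..k. \<bar>Y r c - Y s c\<bar>) | r s. 1 \<le> r \<and> r < s \<and> s \<le> n}" if "x \<in> {V}" for x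
      using that eq[of 1 2] \<open>2 \<le> n\<close> by (intro CollectI exI[of _ 1] exI[of _ 2]) auto
  qed
  then show ?thesis unfolding d1_def by simp
qed

lemma LHD_d1_le_equidistant:
  assumes X: "is_LHD n k X" and Y: "is_LHD n k Y" and "2 \<le> n"
    and eq: "\<And>r s. r \<in> {1..n} \<Longrightarrow> s \<in> {1..n} \<Longrightarrow> r \<noteq> s \<Longrightarrow> (\<Sum>c=1..k. \<bar>Y r c - Y s c\<bar>) = V"
  shows "d1 n k X \<le> V"
proof -
  have "int n * (int n - 1) * d1 n k X
      = (\<Sum>r\<in>{1..n}. \<Sum>s\<in>{1..n}. if r = s then 0 else d1 n k X)"
    by (rule sum_offdiag_const[symmetric])
  also have "\<dots> \<le> (\<Sum>r\<in>{1..n}. \<Sum>s\<in>{1..n}. \<Sum>c=1..k. \<bar>X r c - X s c\<bar>)"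
    using d1_le_row_distance by (intro sum_mono) auto
  also have "\<dots> = (\<Sum>r\<in>{1..n}. \<Sum>s\<in>{1..n}. \<Sum>c=1..k. \<bar>Y r c - Y s c\<bar>)"
    by (simp only: LHD_sum_row_distances[OF X] LHD_sum_row_distances[OF Y])
  also have "\<dots> = (\<Sum>r\<in>{1..n}. \<Sum>s\<in>{1..n}. if r = s then 0 else V)"
    using eq by (intro sum.cong refl) auto
  also have "\<dots> = int n * (int n - 1) * V" by (rule sum_offdiag_const)
  finally show ?thesis using \<open>2 \<le> n\<close> by (simp add: mult_le_cancel_left_pos)
qed

theorem corollary1:
  fixes p m q :: nat
  assumes "prime p" and "odd p" and "m = p - 1" and "q = 2 * m + 1" and "prime q"
  shows "is_LHD m m (Emat q)
         \<and> d1 m m (Emat q) = int (((m + 1) * m) div 3)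
         \<and> (\<forall>X. is_LHD m m X \<longrightarrow> d1 m m X \<le> d1 m m (Emat q))"
proof -
  interpret prime_odd_modulus "int q" m
    using assms(4,5) by unfold_locales simp_all
  have "2 \<le> m"
    using prime_ge_2_nat[OF assms(1)] assms(2,3) by (cases "p = 2") auto
  have lhd: "is_LHD m m (Emat q)"
    unfolding is_LHD_def assms(4) using Emat_column_bij by blast
  have d1E: "d1 m m (Emat q) = int (((m + 1) * m) div 3)"
    unfolding assms(4) using d1_equidistant[OF \<open>2 \<le> m\<close> Emat_row_distance] .
  have "d1 m m X \<le> d1 m m (Emat q)" if "is_LHD m m X" for X
    unfolding d1E using LHD_d1_le_equidistant[OF that lhd \<open>2 \<le> m\<close>] Emat_row_distance
    unfolding assms(4) by blast
  with lhd d1E show ?thesis by blast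
qed

end
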